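(* Let $\Gamma$ be a regular inhomogeneous $Y$-semigroup and $(s,t) \in \Delta_J$. Assume that $A_\Gamma(u) \in \mathcal{B}(Y_1,Y)$ for all $u \in J$ and that $u \mapsto \|A_\Gamma(u)\|_{\mathcal{B}(Y_1,Y)}$ belongs to $L^1([s,t])$. Then for $f \in \mathcal{D}(A_\Gamma \in Y_1)$: \[ \Gamma(s,t)f=f+\int_s^tA_\Gamma(u)f\, du+\int_s^t \int_s^u \Gamma(s,r) A_\Gamma(r) A_\Gamma(u)f\, dr\, du . \] Assume in addition that (i) $A_\Gamma$ is $Y_1$-strongly continuous, and (ii) the maps $u \mapsto \Gamma(s,u) A_\Gamma^2(u)f$ and $u \mapsto \int_s^u \Gamma(s,r) A_\Gamma(r) A'_\Gamma(u)f\,dr$ are Bochner integrable on $[s,t]$. Then for $f \in \mathcal{D}(A_\Gamma')$: \[ \Gamma(s,t)f=f+\int_s^tA_\Gamma(u)f\, du+\int_s^t (t-u) \Gamma(s,u) A_\Gamma^2(u)f\,du+\int_s^t (t-u) \int_s^u \Gamma(s,r) A_\Gamma(r) A'_\Gamma(u)f\,dr\,du . \]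
   Context: Let $(Y,\|\cdot\|)$ be a real separable Banach space and $(Y_1,\|\cdot\|_{Y_1})$ a real separable Banach space continuously embedded in $Y$. $J$ is either $\mathbb{R}^+$ or $[0,T_\infty]$ ($T_\infty>0$), $\Delta_J=\{(s,t)\in J^2:s\le t\}$, $J(s)=\{t\in J:t\ge s\}$. An inhomogeneous $Y$-semigroup is a map $\Gamma:\Delta_J\to\mathcal B(Y)$ with $\Gamma(t,t)=I$ and $\Gamma(s,r)\Gamma(r,t)=\Gamma(s,t)$ for $s\le r\le t$. Generator: for $t\in J$, $\mathcal D(A_\Gamma(t))$ is the set of $f\in Y$ such that $\lim_{h\downarrow0,\,t+h\in J}h^{-1}(\Gamma(t,t+h)-I)f$ and $\lim_{h\downarrow0,\,t-h\in J}h^{-1}(\Gamma(t-h,t)-I)f$ exist in $Y$ and are equal, $A_\Gamma(t)f$ being the common value; $\mathcal D(A_\Gamma)=\bigcap_t\mathcal D(A_\Gamma(t))$. $\Gamma$ is regular if: $Y_1\subseteq\mathcal D(A_\Gamma)$; $\Gamma(s,t)Y_1\subseteq Y_1$ for all $(s,t)\in\Delta_J$ and for every $f\in Y_1$, $t\in J$, $u\mapsto\Gamma(u,t)f$ is $\|\cdot\|_{Y_1}$-continuous on $\{u\in J:u\le t\}$; for every $f\in Y$, $s\in J$, $u\mapsto\Gamma(s,u)f$ is continuous from $J(s)$ into $Y$; and for all $(s,t)\in\Delta_J$, $f\in Y_1$, $u\mapsto\Gamma(s,u)A_\Gamma(u)f$ is Bochner integrable on $[s,t]$. Define $\mathcal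 D(A_\Gamma\in Y_1)=\{f\in\mathcal D(A_\Gamma)\cap Y_1: A_\Gamma(t)f\in Y_1\ \forall t\in J\}$ and $\mathcal D(A'_\Gamma)$ the set of $f\in\mathcal D(A_\Gamma\in Y_1)$ such that for all $t\in J$ the limit $A'_\Gamma(t)f:=\lim_{h\to0,\,t+h\in J}h^{-1}(A_\Gamma(t+h)f-A_\Gamma(t)f)$ exists in the $\|\cdot\|_{Y_1}$-norm and lies in $Y_1$. $A_\Gamma$ is $Y_1$-strongly continuous means that $t\mapsto A_\Gamma(t)f$ is continuous from $J$ into $Y$ for every $f\in Y_1$; $A^2_\Gamma(u)=A_\Gamma(u)A_\Gamma(u)$. *)

theory Defs
  imports "HOL-Analysis.Analysis"
begin

text \<open>Y is modelled as a type 'y, Y1 as a type 'z together with an injective bounded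
linear map (continuous embedding) from 'z into 'y. Separability is encoded by the class
second_countable_topology (a normed space is separable iff second countable). Gamma is only relevant on Delta_J.\<close>

definition is_J :: "real set \<Rightarrow> bool" where
  "is_J J \<longleftrightarrow> J = {0..} \<or> (\<exists>T>0. J = {0..T})"

definition Delta :: "real set \<Rightarrow> (real \<times> real) set" where
  "Delta J = {(s, t). s \<in> J \<and> t \<in> J \<and> s \<le> t}"

definition inhom_semigroup ::
  "real set \<Rightarrow> (real \<Rightarrow> real \<Rightarrow> ('y::real_normed_vector \<Rightarrow>\<^sub>L 'y)) \<Rightarrow> bool" where
  "inhom_semigroup J G \<longleftrightarrow>
     (\<forall>t\<in>J. G t t = id_blinfun) \<and>
     (\<forall>s r t. s \<in> J \<and> r \<in> J \<and> t \<in> J \<and> s \<le> r \<and> r \<le> t \<longrightarrow> G s r o\<^sub>L G r t = G s t)"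

definition has_gen ::
  "real set \<Rightarrow> (real \<Rightarrow> real \<Rightarrow> ('y::real_normed_vector \<Rightarrow>\<^sub>L 'y)) \<Rightarrow> real \<Rightarrow> 'y \<Rightarrow> 'y \<Rightarrow> bool" where
  "has_gen J G t f g \<longleftrightarrow>
     ((\<lambda>h. (1 / h) *\<^sub>R (blinfun_apply (G t (t + h)) f - f)) \<longlongrightarrow> g)
        (at 0 within {h. 0 < h \<and> t + h \<in> J}) \<and>
     ((\<lambda>h. (1 / h) *\<^sub>R (blinfun_apply (G (t - h) t) f - f)) \<longlongrightarrow> g)
        (at 0 within {h. 0 < h \<and> t - h \<in> J})"

definition gen_dom ::
  "real set \<Rightarrow> (real \<Rightarrow> real \<Rightarrow> ('y::real_normed_vector \<Rightarrow>\<^sub>L 'y)) \<Rightarrow> real \<Rightarrow> 'y \<Rightarrow> bool" where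
  "gen_dom J G t f \<longleftrightarrow> (\<exists>g. has_gen J G t f g)"

definition gen ::
  "real set \<Rightarrow> (real \<Rightarrow> real \<Rightarrow> ('y::real_normed_vector \<Rightarrow>\<^sub>L 'y)) \<Rightarrow> real \<Rightarrow> 'y \<Rightarrow> 'y" where
  "gen J G t f = (THE g. has_gen J G t f g)"

definition regular ::
  "real set \<Rightarrow> (real \<Rightarrow> real \<Rightarrow> ('y::{banach,second_countable_topology} \<Rightarrow>\<^sub>L 'y))
     \<Rightarrow> ('z::real_normed_vector \<Rightarrow>\<^sub>L 'y) \<Rightarrow> bool" where
  "regular J G \<iota> \<longleftrightarrow>
     (\<forall>t\<in>J. \<forall>z. gen_dom J G t (blinfun_apply \<iota> z)) \<and>
     (\<forall>(s, t)\<in>Delta J. \<forall>z. blinfun_apply (G s t) (blinfun_apply \<iota> z) \<in> range (blinfun_apply \<iota>)) \<and>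
     (\<forall>t\<in>J. \<forall>z. continuous_on {u\<in>J. u \<le> t}
         (\<lambda>u. inv (blinfun_apply \<iota>) (blinfun_apply (G u t) (blinfun_apply \<iota> z)))) \<and>
     (\<forall>s\<in>J. \<forall>f. continuous_on {u\<in>J. s \<le> u} (\<lambda>u. blinfun_apply (G s u) f)) \<and>
     (\<forall>(s, t)\<in>Delta J. \<forall>z. set_integrable lborel {s..t}
         (\<lambda>u. blinfun_apply (G s u) (gen J G u (blinfun_apply \<iota> z))))"

definition dom_AY1 ::
  "real set \<Rightarrow> (real \<Rightarrow> real \<Rightarrow> ('y::real_normed_vector \<Rightarrow>\<^sub>L 'y)) \<Rightarrow> ('z::real_normed_vector \<Rightarrow>\<^sub>L 'y) \<Rightarrow> 'y set" where
  "dom_AY1 J G \<iota> = {f. f \<in> range (blinfun_apply \<iota>) \<and>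
      (\<forall>t\<in>J. gen_dom J G t f \<and> gen J G t f \<in> range (blinfun_apply \<iota>))}"

definition has_gen_deriv ::
  "real set \<Rightarrow> (real \<Rightarrow> real \<Rightarrow> ('y::real_normed_vector \<Rightarrow>\<^sub>L 'y)) \<Rightarrow> ('z::real_normed_vector \<Rightarrow>\<^sub>L 'y)
     \<Rightarrow> real \<Rightarrow> 'y \<Rightarrow> 'z \<Rightarrow> bool" where
  "has_gen_deriv J G \<iota> t f g' \<longleftrightarrow>
     ((\<lambda>h. (1 / h) *\<^sub>R (inv (blinfun_apply \<iota>) (gen J G (t + h) f) - inv (blinfun_apply \<iota>) (gen J G t f)))
        \<longlongrightarrow> g') (at 0 within {h. t + h \<in> J})"

definition dom_A' ::
  "real set \<Rightarrow> (real \<Rightarrow> real \<Rightarrow> ('y::real_normed_vector \<Rightarrow>\<^sub>L 'y)) \<Rightarrow> ('z::real_normed_vector \<Rightarrow>\<^sub>L 'y) \<Rightarrow> 'y set" where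
  "dom_A' J G \<iota> = {f \<in> dom_AY1 J G \<iota>. \<forall>t\<in>J. \<exists>g'. has_gen_deriv J G \<iota> t f g'}"

definition gen' ::
  "real set \<Rightarrow> (real \<Rightarrow> real \<Rightarrow> ('y::real_normed_vector \<Rightarrow>\<^sub>L 'y)) \<Rightarrow> ('z::real_normed_vector \<Rightarrow>\<^sub>L 'y)
     \<Rightarrow> real \<Rightarrow> 'y \<Rightarrow> 'y" where
  "gen' J G \<iota> t f = blinfun_apply \<iota> (THE g'. has_gen_deriv J G \<iota> t f g')"

end

theory Submission
  imports Defs
begin

text \<open>For \<open>x \<in> Y\<^sub>1\<close> regularity gives \<open>\<partial>\<^sub>v \<Gamma>(a,v)x = \<Gamma>(a,v)A(v)x\<close>, hence
  \<open>\<Gamma>(a,b)x - x = \<integral>\<^sub>a\<^sup>b \<Gamma>(a,v)A(v)x dv\<close>. Applied to \<open>x = f\<close> and to \<open>x = A(u)f\<close> this gives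
  \<open>\<Gamma>(s,t)f = f + \<integral>\<^sub>s\<^sup>t A(u)f du + \<integral>\<^sub>s\<^sup>t F(u) du\<close> with \<open>F(u) = \<Gamma>(s,u)A(u)f - A(u)f\<close>, the first
  formula; \<open>A(\<cdot>)f\<close> is Bochner integrable since it is measurable (a pointwise limit of
  \<open>\<Gamma>(a\<^sub>k,u)A(u)f\<close> with \<open>a\<^sub>k \<uparrow> u\<close>) and dominated by \<open>\<parallel>A(u)\<parallel> \<parallel>f\<parallel>\<^sub>Y\<^sub>1\<close>.
  For \<open>f \<in> D(A')\<close> the function \<open>F\<close> vanishes at \<open>s\<close> and is differentiable by a product rule for the
  strongly continuous, locally bounded family \<open>\<Gamma>(s,\<cdot>)\<close>, so \<open>\<integral>\<^sub>s\<^sup>t F = \<integral>\<^sub>s\<^sup>t (t-u) F'(u) du\<close>;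
  expanding \<open>F'\<close> gives the second formula. The fundamental theorem of calculus is available for
  Henstock-Kurzweil integrals, which agree with Bochner integrals on intervals.\<close>

section \<open>Analysis on real intervals\<close>

lemma has_integral_approximation:
  fixes f :: "real \<Rightarrow> 'y::real_normed_vector"
  assumes approx: "\<And>e. e > 0 \<Longrightarrow> \<exists>g yg h r. (g has_integral yg) {a..b} \<and> (h has_integral r) {a..b}
      \<and> (\<forall>x\<in>{a..b}. norm (f x - g x) \<le> h x) \<and> r < e \<and> norm (yg - y) < e"
  shows "(f has_integral y) {a..b}"
  unfolding has_integral_real
proof (intro allI impI)
  fix \<epsilon> :: real assume "\<epsilon> > 0"
  then obtain g yg h r where g: "(g has_integral yg) {a..b}" and h: "(h has_integral r) {a..b}"
    and fg: "\<forall>x\<in>{a..b}. norm (f x - g x) \<le> h x" and r: "r < \<epsilon>/4" and yg: "norm (yg - y) < \<epsilon>/4"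
    using approx[of "\<epsilon>/4"] by auto
  obtain \<gamma>1 where \<gamma>1: "gauge \<gamma>1" "\<And>D. D tagged_division_of {a..b} \<Longrightarrow> \<gamma>1 fine D \<Longrightarrow>
      norm ((\<Sum>(x,k)\<in>D. measure lborel k *\<^sub>R g x) - yg) < \<epsilon>/4"
    using g[unfolded has_integral_real] \<open>\<epsilon> > 0\<close> by (meson divide_pos_pos zero_less_numeral)
  obtain \<gamma>2 where \<gamma>2: "gauge \<gamma>2" "\<And>D. D tagged_division_of {a..b} \<Longrightarrow> \<gamma>2 fine D \<Longrightarrow>
      norm ((\<Sum>(x,k)\<in>D. measure lborel k *\<^sub>R h x) - r) < \<epsilon>/4"
    using h[unfolded has_integral_real] \<open>\<epsilon> > 0\<close> by (meson divide_pos_pos zero_less_numeral)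
  show "\<exists>\<gamma>. gauge \<gamma> \<and> (\<forall>\<D>. \<D> tagged_division_of {a..b} \<and> \<gamma> fine \<D> \<longrightarrow>
          norm ((\<Sum>(x, k)\<in>\<D>. measure lborel k *\<^sub>R f x) - y) < \<epsilon>)"
  proof (intro exI conjI allI impI)
    show "gauge (\<lambda>x. \<gamma>1 x \<inter> \<gamma>2 x)" using \<gamma>1 \<gamma>2 by (simp add: gauge_Int)
    fix D assume "D tagged_division_of {a..b} \<and> (\<lambda>x. \<gamma>1 x \<inter> \<gamma>2 x) fine D"
    then have D: "D tagged_division_of {a..b}" and D1: "\<gamma>1 fine D" and D2: "\<gamma>2 fine D"
      by (auto simp: fine_Int)
    let ?S = "\<lambda>\<phi>. \<Sum>(x,k)\<in>D. measure lborel k *\<^sub>R \<phi> x"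
    have "norm (?S f - ?S g) = norm (\<Sum>(x,k)\<in>D. measure lborel k *\<^sub>R (f x - g x))"
      by (simp add: sum_subtractf[symmetric] split_def scaleR_diff_right)
    also have "\<dots> \<le> (\<Sum>(x,k)\<in>D. norm (measure lborel k *\<^sub>R (f x - g x)))"
      by (rule norm_sum[THEN order_trans]) (simp add: split_def)
    also have "\<dots> \<le> ?S h"
      using D by (intro sum_mono) (auto simp: split_def intro!: mult_left_mono fg[rule_format]
          dest: tag_in_interval)
    finally have "norm (?S f - ?S g) \<le> ?S h" .
    moreover have "?S h < r + \<epsilon>/4" using \<gamma>2(2)[OF D D2] by (simp add: split_def abs_if split: if_splits)
    moreover have "norm (?S f - y) \<le> norm (?S f - ?S g) + norm (?S g - yg) + norm (yg - y)"
      by (meson norm_diff_triangle_le order_refl)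
    ultimately show "norm (?S f - y) < \<epsilon>" using \<gamma>1(2)[OF D D1] r yg by linarith
  qed
qed

lemma integral_indicator_norm_diff_tendsto_zero:
  fixes f :: "'a \<Rightarrow> 'y::{banach,second_countable_topology}"
  assumes f: "integrable M f" and s: "\<And>i. s i \<in> borel_measurable M" and A: "A \<in> sets M"
    and lim: "\<And>x. x \<in> space M \<Longrightarrow> (\<lambda>i. s i x) \<longlonglongrightarrow> f x"
    and bound: "\<And>x i. x \<in> space M \<Longrightarrow> norm (s i x) \<le> 2 * norm (f x)"
  shows "(\<lambda>i. \<integral>x. indicator A x * norm (f x - s i x) \<partial>M) \<longlonglongrightarrow> 0"
proof -
  have "(\<lambda>i. \<integral>x. indicator A x * norm (f x - s i x) \<partial>M) \<longlonglongrightarrow> (\<integral>x. indicator A x * 0 \<partial>M)"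
  proof (rule integral_dominated_convergence[where w="\<lambda>x. 3 * norm (f x)"])
    show "AE x in M. (\<lambda>i. indicator A x * norm (f x - s i x)) \<longlonglongrightarrow> indicator A x * 0"
    proof (intro AE_I2 impI tendsto_mult tendsto_const)
      fix x assume "x \<in> space M"
      then have "(\<lambda>i. f x - s i x) \<longlonglongrightarrow> f x - f x" using lim by (intro tendsto_diff tendsto_const)
      then show "(\<lambda>i. norm (f x - s i x)) \<longlonglongrightarrow> 0" by (simp add: tendsto_norm_zero)
    qed
    show "AE x in M. norm (indicator A x * norm (f x - s i x)) \<le> 3 * norm (f x)" for i
    proof (intro AE_I2 impI)
      fix x assume "x \<in> space M"
      then have "norm (f x - s i x) \<le> 3 * norm (f x)"
        using bound[of x i] norm_triangle_ineq4[of "f x" "s i x"] by simp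
      then show "norm (indicator A x * norm (f x - s i x)) \<le> 3 * norm (f x)"
        by (auto split: split_indicator)
    qed
  qed (use f s A in auto)
  then show ?thesis by simp
qed

lemma integrable_has_integral_Icc:
  fixes g :: "real \<Rightarrow> 'y::{banach,second_countable_topology}"
  assumes "integrable lborel g"
  shows "(g has_integral (\<integral>x. indicator {a..b} x *\<^sub>R g x \<partial>lborel)) {a..b}"
  using assms
proof (induct rule: integrable_induct)
  case (base A c)
  have "integrable lborel (\<lambda>x. indicator {a..b} x *\<^sub>R (indicator A x :: real))"
    using base by (intro integrable_mult_indicator) auto
  then have A: "set_integrable lborel {a..b} (indicator A :: real \<Rightarrow> real)"
    by (simp add: set_integrable_def)
  have "(indicator A has_integral (LINT x:{a..b}|lborel. (indicator A x :: real))) {a..b}"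
    using set_borel_integral_eq_integral[OF A] by (simp add: integrable_integral)
  then have "((\<lambda>x. indicator A x *\<^sub>R c) has_integral (LINT x:{a..b}|lborel. (indicator A x :: real)) *\<^sub>R c) {a..b}"
    by (rule has_integral_scaleR_left)
  moreover have "(\<integral>x. indicator {a..b} x *\<^sub>R (indicator A x *\<^sub>R c) \<partial>lborel)
      = (LINT x:{a..b}|lborel. (indicator A x :: real)) *\<^sub>R c"
    using A unfolding set_lebesgue_integral_def
    by (simp add: set_integrable_def flip: integral_scaleR_left)
  ultimately show ?case by simp
next
  case (add f g)
  have "integrable lborel (\<lambda>x. indicator {a..b} x *\<^sub>R f x)" "integrable lborel (\<lambda>x. indicator {a..b} x *\<^sub>R g x)"
    using add by (auto intro: integrable_mult_indicator)
  then show ?case using has_integral_add[OF add(2) add(4)] by (simp add: scaleR_add_right)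
next
  case (lim f s)
  let ?I = "\<lambda>\<phi>. \<integral>x. indicator {a..b} x *\<^sub>R \<phi> x \<partial>lborel"
  let ?E = "\<lambda>i. \<integral>x. indicator {a..b} x * norm (f x - s i x) \<partial>lborel"
  have err: "?E \<longlonglongrightarrow> 0"
    using lim by (intro integral_indicator_norm_diff_tendsto_zero) auto
  show ?case
  proof (rule has_integral_approximation)
    fix e :: real assume "e > 0"
    then have "eventually (\<lambda>i. ?E i < e) sequentially" using err by (rule order_tendstoD(2)[rotated])
    then obtain i where i: "?E i < e" by (meson eventually_sequentially order_refl)
    have fs: "integrable lborel (\<lambda>x. indicator {a..b} x *\<^sub>R f x)" "integrable lborel (\<lambda>x. indicator {a..b} x *\<^sub>R s i x)"
      using lim by (auto intro: integrable_mult_indicator)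
    have Ei: "set_integrable lborel {a..b} (\<lambda>x. norm (f x - s i x))"
      using lim unfolding set_integrable_def by (intro integrable_mult_indicator) auto
    have "((\<lambda>x. norm (f x - s i x)) has_integral integral {a..b} (\<lambda>x. norm (f x - s i x))) {a..b}"
      using set_borel_integral_eq_integral(1)[OF Ei] by (rule integrable_integral)
    moreover have "integral {a..b} (\<lambda>x. norm (f x - s i x)) = ?E i"
      using set_borel_integral_eq_integral(2)[OF Ei] by (simp add: set_lebesgue_integral_def)
    ultimately have "((\<lambda>x. norm (f x - s i x)) has_integral ?E i) {a..b}" by simp
    moreover have "norm (?I (s i) - ?I f) \<le> ?E i"
    proof -
      have "norm (?I (s i) - ?I f) = norm (?I (\<lambda>x. f x - s i x))"
        using fs by (simp add: scaleR_diff_right norm_minus_commute)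
      also have "\<dots> \<le> ?E i"
        by (rule integral_norm_bound[THEN order_trans]) (simp add: abs_mult)
      finally show ?thesis .
    qed
    ultimately show "\<exists>g yg h r. (g has_integral yg) {a..b} \<and> (h has_integral r) {a..b}
        \<and> (\<forall>x\<in>{a..b}. norm (f x - g x) \<le> h x) \<and> r < e \<and> norm (yg - ?I f) < e"
      using lim(2)[of i] i
      by (intro exI[of _ "s i"] exI[of _ "?I (s i)"] exI[of _ "\<lambda>x. norm (f x - s i x)"] exI[of _ "?E i"])
        auto
  qed
qed

lemma set_integrable_has_integral:
  fixes f :: "real \<Rightarrow> 'y::{banach,second_countable_topology}"
  assumes "set_integrable lborel {a..b} f"
  shows "(f has_integral (LBINT x:{a..b}. f x)) {a..b}"
proof -
  have "(\<lambda>x. indicator {a..b} x *\<^sub>R (indicator {a..b} x *\<^sub>R f x)) = (\<lambda>x. indicator {a..b} x *\<^sub>R f x)"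
    by (auto split: split_indicator)
  then have "((\<lambda>x. indicator {a..b} x *\<^sub>R f x) has_integral (LBINT x:{a..b}. f x)) {a..b}"
    using integrable_has_integral_Icc[OF assms[unfolded set_integrable_def], of a b]
    by (simp add: set_lebesgue_integral_def)
  then show ?thesis
    by (rule has_integral_eq[rotated]) (simp add: indicator_def)
qed

lemma set_integral_FTC:
  fixes f :: "real \<Rightarrow> 'y::{banach,second_countable_topology}"
  assumes "a \<le> b" and "continuous_on {a..b} f"
    and "\<And>x. a < x \<Longrightarrow> x < b \<Longrightarrow> (f has_vector_derivative f' x) (at x)"
    and "set_integrable lborel {a..b} f'"
  shows "(LBINT x:{a..b}. f' x) = f b - f a"
proof (rule has_integral_unique[OF set_integrable_has_integral[OF assms(4)]])
  show "(f' has_integral f b - f a) {a..b}"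
    using assms(3) by (intro fundamental_theorem_of_calculus_interior[OF assms(1,2)]) simp
qed

lemma set_integrable_bounded_scaleR:
  fixes g :: "'a \<Rightarrow> 'y::{banach,second_countable_topology}"
  assumes g: "set_integrable M A g" and w: "w \<in> borel_measurable M"
    and bound: "\<And>x. x \<in> A \<Longrightarrow> \<bar>w x\<bar> \<le> B"
  shows "set_integrable M A (\<lambda>x. w x *\<^sub>R g x)"
proof (rule set_integrable_bound[where f="\<lambda>x. B *\<^sub>R g x"])
  show "set_integrable M A (\<lambda>x. B *\<^sub>R g x)" using g by auto
  have "(\<lambda>x. w x *\<^sub>R (indicator A x *\<^sub>R g x)) \<in> borel_measurable M"
    using w borel_measurable_integrable[OF g[unfolded set_integrable_def]] by measurable
  then show "set_borel_measurable M A (\<lambda>x. w x *\<^sub>R g x)"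
    unfolding set_borel_measurable_def by (simp add: mult.commute)
  show "AE x in M. x \<in> A \<longrightarrow> norm (w x *\<^sub>R g x) \<le> norm (B *\<^sub>R g x)"
  proof (intro AE_I2 impI)
    fix x assume "x \<in> A"
    then have "\<bar>w x\<bar> * norm (g x) \<le> \<bar>B\<bar> * norm (g x)"
      using bound[of x] by (intro mult_right_mono) auto
    then show "norm (w x *\<^sub>R g x) \<le> norm (B *\<^sub>R g x)" by simp
  qed
qed

text \<open>Cauchy's formula for repeated integration: integrate the derivative of \<open>(t - u) F(u)\<close>,
  which vanishes at both ends.\<close>
lemma set_integral_eq_weighted_derivative:
  fixes F :: "real \<Rightarrow> 'y::{banach,second_countable_topology}"
  assumes st: "s \<le> t" and F_cont: "continuous_on {s..t} F" and F_s: "F s = 0"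
    and F_deriv: "\<And>u. s < u \<Longrightarrow> u < t \<Longrightarrow> (F has_vector_derivative F' u) (at u)"
    and F_int: "set_integrable lborel {s..t} F" and F'_int: "set_integrable lborel {s..t} F'"
  shows "(LBINT u:{s..t}. F u) = (LBINT u:{s..t}. (t - u) *\<^sub>R F' u)"
proof -
  have weighted_int: "set_integrable lborel {s..t} (\<lambda>u. (t - u) *\<^sub>R F' u)"
    using st by (intro set_integrable_bounded_scaleR[OF F'_int, where B="t - s"]) auto
  have "(LBINT u:{s..t}. (t - u) *\<^sub>R F' u - F u) = (t - t) *\<^sub>R F t - (t - s) *\<^sub>R F s"
  proof (rule set_integral_FTC[OF st])
    show "continuous_on {s..t} (\<lambda>u. (t - u) *\<^sub>R F u)" by (intro continuous_intros F_cont)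
    show "((\<lambda>v. (t - v) *\<^sub>R F v) has_vector_derivative (t - u) *\<^sub>R F' u - F u) (at u)"
      if "s < u" "u < t" for u
    proof -
      have "((\<lambda>v. t - v) has_real_derivative -1) (at u)" by (auto intro!: derivative_eq_intros)
      from has_vector_derivative_scaleR[OF this F_deriv[OF that]] show ?thesis by simp
    qed
    show "set_integrable lborel {s..t} (\<lambda>u. (t - u) *\<^sub>R F' u - F u)"
      using weighted_int F_int by auto
  qed
  then show ?thesis using weighted_int F_int F_s by simp
qed

lemma at_within_ne_bot_if_interval_subset:
  fixes x :: real
  assumes "a < b" and "{a<..<b} \<subseteq> S" and "x = a \<or> x = b"
  shows "at x within S \<noteq> bot"
proof -
  have "x islimpt {a<..<b}"
    using assms(1,3) islimpt_greaterThanLessThan1 islimpt_greaterThanLessThan2 by blast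
  then show ?thesis using assms(2) islimpt_subset by (auto simp: trivial_limit_within)
qed

lemma grid_point_bounds:
  fixes s u c :: real
  assumes "s \<le> u" and "0 < c"
  shows "s \<le> s + real (nat \<lfloor>c * (u - s)\<rfloor>) / c"
    and "s + real (nat \<lfloor>c * (u - s)\<rfloor>) / c \<le> u"
    and "u - 1 / c \<le> s + real (nat \<lfloor>c * (u - s)\<rfloor>) / c"
proof -
  have n: "real (nat \<lfloor>c * (u - s)\<rfloor>) = \<lfloor>c * (u - s)\<rfloor>" using assms by simp
  show "s \<le> s + real (nat \<lfloor>c * (u - s)\<rfloor>) / c" using assms(2) by simp
  have "real (nat \<lfloor>c * (u - s)\<rfloor>) / c \<le> c * (u - s) / c"
    using divide_right_mono[of _ "c * (u - s)" c] assms(2) n by simp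
  then show "s + real (nat \<lfloor>c * (u - s)\<rfloor>) / c \<le> u" using assms(2) by simp
  have "c * (u - s) - 1 \<le> real (nat \<lfloor>c * (u - s)\<rfloor>)" using n by linarith
  then have "(c * (u - s) - 1) / c \<le> real (nat \<lfloor>c * (u - s)\<rfloor>) / c"
    using assms(2) by (simp add: divide_right_mono)
  then show "u - 1 / c \<le> s + real (nat \<lfloor>c * (u - s)\<rfloor>) / c"
    using assms(2) by (simp add: diff_divide_distrib)
qed

lemma grid_point_tendsto:
  fixes s u :: real
  assumes "s \<le> u"
  shows "(\<lambda>k. s + real (nat \<lfloor>real (Suc k) * (u - s)\<rfloor>) / real (Suc k)) \<longlonglongrightarrow> u"
proof (rule tendsto_sandwich[OF _ _ _ tendsto_const])
  have "(\<lambda>k. u - 1 / real (Suc k)) \<longlonglongrightarrow> u - 0"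
    by (intro tendsto_intros LIMSEQ_inverse_real_of_nat[unfolded inverse_eq_divide])
  then show "(\<lambda>k. u - 1 / real (Suc k)) \<longlonglongrightarrow> u" by simp
qed (use grid_point_bounds[OF assms] in simp_all)

section \<open>Families of bounded operators\<close>

lemma uniform_boundedness_blinfun:
  fixes T :: "'i \<Rightarrow> ('a::banach \<Rightarrow>\<^sub>L 'b::real_normed_vector)"
  assumes pointwise_bounded: "\<And>x. \<exists>B. \<forall>i\<in>K. norm (T i x) \<le> B"
  shows "\<exists>C. \<forall>i\<in>K. norm (T i) \<le> C"
proof -
  define E where "E n = {x. \<forall>i\<in>K. norm (T i x) \<le> real n}" for n :: nat
  have closed_E: "closed (E n)" for n
  proof -
    have "E n = (\<Inter>i\<in>K. {x. norm (T i x) \<le> real n})" by (auto simp: E_def)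
    then show ?thesis by (auto intro!: closed_INT closed_Collect_le continuous_intros)
  qed
  have "x \<in> E (nat \<lceil>B\<rceil>)" if "\<forall>i\<in>K. norm (T i x) \<le> B" for x B
  proof -
    have "B \<le> real (nat \<lceil>B\<rceil>)" by linarith
    with that show ?thesis unfolding E_def by (blast intro: order_trans)
  qed
  then have cover: "\<Union>(range E) = UNIV" using pointwise_bounded by (metis UNIV_eq_I rangeI UnionI)
  have "\<exists>n. interior (E n) \<noteq> {}"
  proof (rule ccontr)
    assume "\<not> ?thesis"
    then have "euclidean interior_of \<Union>(range E) = {}"
      by (intro Baire_category_alt) (auto simp: completely_metrizable_space_euclidean euclidean_interior_of
          closed_E simp flip: closed_closedin)
    then show False using cover by (simp add: euclidean_interior_of)
  qed
  then obtain n x0 where "x0 \<in> interior (E n)" by blast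
  then obtain r where r: "r > 0" "ball x0 r \<subseteq> E n"
    using open_interior[of "E n"] interior_subset[of "E n"] by (meson open_contains_ball subset_trans)
  have x0: "x0 \<in> E n" using r by (meson centre_in_ball subsetD)
  text \<open>Every vector of norm \<open>r/2\<close> is a difference of two points of the ball, so \<open>T i\<close> maps
    it into the ball of radius \<open>2n\<close>.\<close>
  have bound: "norm (T i x) \<le> (4 * real n / r) * norm x" if i: "i \<in> K" for i x
  proof (cases "x = 0")
    case False
    define y where "y = (r / (2 * norm x)) *\<^sub>R x"
    have "norm y = r / 2" using False r by (simp add: y_def)
    then have "x0 + y \<in> E n" using r by (intro subsetD[OF r(2)]) (simp add: dist_norm)
    then have "norm (T i (x0 + y) - T i x0) \<le> 2 * real n"
      using x0 i norm_triangle_ineq4[of "T i (x0 + y)" "T i x0"] unfolding E_def by fastforce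
    then have "norm (T i y) \<le> 2 * real n" by (simp add: blinfun.add_right)
    have "T i x = (2 * norm x / r) *\<^sub>R T i y"
      using False r by (simp add: y_def blinfun.scaleR_right)
    then have "norm (T i x) = (2 * norm x / r) * norm (T i y)" using r by simp
    also have "\<dots> \<le> (2 * norm x / r) * (2 * real n)"
      using \<open>norm (T i y) \<le> 2 * real n\<close> r by (intro mult_left_mono) auto
    finally show ?thesis by (simp add: field_simps)
  qed simp
  have "0 \<le> 4 * real n / r" using r by simp
  then show ?thesis using bound by (intro exI ballI norm_blinfun_bound)
qed

lemma tendsto_blinfun_apply_bounded:
  fixes T :: "'i \<Rightarrow> ('a::real_normed_vector \<Rightarrow>\<^sub>L 'b::real_normed_vector)"
  assumes bounded: "eventually (\<lambda>i. norm (T i) \<le> C) F"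
    and T: "((\<lambda>i. T i x) \<longlongrightarrow> y) F" and w: "(w \<longlongrightarrow> x) F"
  shows "((\<lambda>i. T i (w i)) \<longlongrightarrow> y) F"
proof -
  have "((\<lambda>i. T i (w i - x)) \<longlongrightarrow> 0) F"
  proof (rule Lim_null_comparison)
    show "eventually (\<lambda>i. norm (T i (w i - x)) \<le> C * norm (w i - x)) F"
      using bounded by eventually_elim (meson norm_blinfun order_trans mult_right_mono norm_ge_zero)
    show "((\<lambda>i. C * norm (w i - x)) \<longlongrightarrow> 0) F"
      using w by (simp add: LIM_zero tendsto_mult_right_zero tendsto_norm_zero)
  qed
  from tendsto_add[OF T this] show ?thesis by (simp add: blinfun.diff_right)
qed

lemma continuous_on_blinfun_apply_bounded:
  fixes T :: "'i::topological_space \<Rightarrow> ('a::real_normed_vector \<Rightarrow>\<^sub>L 'b::real_normed_vector)"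
  assumes bounded: "\<forall>x\<in>S. norm (T x) \<le> C" and T: "\<And>y. continuous_on S (\<lambda>x. T x y)"
    and w: "continuous_on S w"
  shows "continuous_on S (\<lambda>x. T x (w x))"
  unfolding continuous_on_def
proof
  fix x assume x: "x \<in> S"
  show "((\<lambda>v. T v (w v)) \<longlongrightarrow> T x (w x)) (at x within S)"
  proof (rule tendsto_blinfun_apply_bounded)
    show "eventually (\<lambda>v. norm (T v) \<le> C) (at x within S)"
      using bounded by (auto simp: eventually_at_filter)
    show "((\<lambda>v. T v (w x)) \<longlongrightarrow> T x (w x)) (at x within S)"
      using T x by (simp add: continuous_on_def)
    show "(w \<longlongrightarrow> w x) (at x within S)"
      using w x by (simp add: continuous_on_def)
  qed
qed

lemma tendsto_at_within_shift:
  fixes f :: "'a::real_normed_vector \<Rightarrow> 'b::topological_space"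
  assumes "((\<lambda>h. f (x + h)) \<longlongrightarrow> l) (at 0 within {h. x + h \<in> S})"
  shows "(f \<longlongrightarrow> l) (at x within S)"
proof -
  have "filtermap (\<lambda>h. x + h) (at 0 within {h. x + h \<in> S}) = at (x + 0) within (\<lambda>h. x + h) ` {h. x + h \<in> S}"
    by (intro filtermap_linear_at_within bij_plus open_translation continuous_intros)
  also have "(\<lambda>h. x + h) ` {h. x + h \<in> S} = S"
    by (force simp: image_iff intro: exI[of _ "_ - x"])
  finally have "at x within S = filtermap (\<lambda>h. x + h) (at 0 within {h. x + h \<in> S})" by simp
  then show ?thesis using assms by (simp add: filterlim_filtermap)
qed

lemma has_vector_derivative_iff_quotient:
  fixes f :: "real \<Rightarrow> 'a::real_normed_vector"
  shows "(f has_vector_derivative D) (at x) \<longleftrightarrow> ((\<lambda>h. (1/h) *\<^sub>R (f (x+h) - f x)) \<longlongrightarrow> D) (at 0)"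
proof -
  have "eventually (\<lambda>h. norm (f (x + h) - f x - h *\<^sub>R D) / norm h =
      norm ((1/h) *\<^sub>R (f (x+h) - f x) - D)) (at (0::real))"
  proof (rule eventually_at_filter[THEN iffD2], intro always_eventually allI impI)
    fix h :: real assume "h \<noteq> 0"
    then have "(1/h) *\<^sub>R (f (x+h) - f x) - D = (1/h) *\<^sub>R (f (x + h) - f x - h *\<^sub>R D)"
      by (simp add: scaleR_diff_right)
    then show "norm (f (x + h) - f x - h *\<^sub>R D) / norm h = norm ((1/h) *\<^sub>R (f (x+h) - f x) - D)"
      by (simp add: divide_inverse_commute)
  qed
  then have "(\<lambda>h. norm (f (x + h) - f x - h *\<^sub>R D) / norm h) \<midarrow>0\<rightarrow> 0 \<longleftrightarrow>
      ((\<lambda>h. (1/h) *\<^sub>R (f (x+h) - f x) - D) \<longlongrightarrow> 0) (at 0)"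
    by (simp add: tendsto_cong tendsto_norm_zero_iff)
  then show ?thesis
    by (simp add: has_vector_derivative_def has_derivative_at bounded_linear_scaleR_left LIM_zero_iff)
qed

lemma has_vector_derivative_blinfun_apply:
  fixes T :: "real \<Rightarrow> ('a::real_normed_vector \<Rightarrow>\<^sub>L 'b::real_normed_vector)"
  assumes bounded: "eventually (\<lambda>v. norm (T v) \<le> C) (at u)"
    and cont: "isCont (\<lambda>v. T v w') u"
    and T_deriv: "((\<lambda>v. T v (w u)) has_vector_derivative T') (at u)"
    and w_deriv: "(w has_vector_derivative w') (at u)"
  shows "((\<lambda>v. T v (w v)) has_vector_derivative T u w' + T') (at u)"
  unfolding has_vector_derivative_iff_quotient
proof -
  have "((\<lambda>h. T (u + h) ((1/h) *\<^sub>R (w (u + h) - w u))) \<longlongrightarrow> T u w') (at 0)"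
  proof (rule tendsto_blinfun_apply_bounded)
    show "eventually (\<lambda>h. norm (T (u + h)) \<le> C) (at 0)"
      using bounded unfolding eventually_at_to_0[of _ u] by (simp only: add.commute)
    show "((\<lambda>h. T (u + h) w') \<longlongrightarrow> T u w') (at 0)"
      using cont unfolding isCont_def filterlim_at_to_0[of _ _ u] by (simp only: add.commute)
    show "((\<lambda>h. (1/h) *\<^sub>R (w (u + h) - w u)) \<longlongrightarrow> w') (at 0)"
      using w_deriv by (simp only: has_vector_derivative_iff_quotient)
  qed
  moreover have "((\<lambda>h. (1/h) *\<^sub>R (T (u + h) (w u) - T u (w u))) \<longlongrightarrow> T') (at 0)"
    using T_deriv by (simp only: has_vector_derivative_iff_quotient)
  ultimately have "((\<lambda>h. T (u + h) ((1/h) *\<^sub>R (w (u + h) - w u)) + (1/h) *\<^sub>R (T (u + h) (w u) - T u (w u)))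
      \<longlongrightarrow> T u w' + T') (at 0)"
    by (rule tendsto_add)
  moreover have "T (u + h) ((1/h) *\<^sub>R (w (u + h) - w u)) + (1/h) *\<^sub>R (T (u + h) (w u) - T u (w u))
      = (1/h) *\<^sub>R (T (u + h) (w (u + h)) - T u (w u))" for h
    by (simp add: blinfun.scaleR_right blinfun.diff_right scaleR_diff_right)
  ultimately show "((\<lambda>h. (1/h) *\<^sub>R (T (u + h) (w (u + h)) - T u (w u))) \<longlongrightarrow> T u w' + T') (at 0)"
    by simp
qed

section \<open>Regular inhomogeneous semigroups\<close>

locale regular_inhom_semigroup =
  fixes J :: "real set"
    and G :: "real \<Rightarrow> real \<Rightarrow> ('y::{banach,second_countable_topology} \<Rightarrow>\<^sub>L 'y)"
    and \<iota> :: "'z::real_normed_vector \<Rightarrow>\<^sub>L 'y"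
  assumes J: "is_J J" and semigroup: "inhom_semigroup J G" and regular: "regular J G \<iota>"
begin

lemma Icc_subset_J: "a \<in> J \<Longrightarrow> b \<in> J \<Longrightarrow> {a..b} \<subseteq> J"
  using J by (auto simp: is_J_def)

lemma J_not_singleton:
  assumes "t \<in> J" obtains v where "v \<in> J" "v \<noteq> t"
proof -
  consider "J = {0..}" | T where "T > 0" "J = {0..T}" using J by (auto simp: is_J_def)
  then show ?thesis
  proof cases
    case 1
    then show ?thesis using that[of "t + 1"] assms by simp
  next
    case 2
    then show ?thesis using that[of 0] that[of T] by force
  qed
qed

lemma G_id: "t \<in> J \<Longrightarrow> G t t x = x"
  using semigroup by (simp add: inhom_semigroup_def)

lemma G_comp: "a \<in> J \<Longrightarrow> r \<in> J \<Longrightarrow> b \<in> J \<Longrightarrow> a \<le> r \<Longrightarrow> r \<le> b \<Longrightarrow> G a b x = G a r (G r b x)"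
  using semigroup unfolding inhom_semigroup_def by (metis blinfun_apply_blinfun_compose)

lemma has_gen_unique:
  assumes t: "t \<in> J" and "has_gen J G t f g1" and "has_gen J G t f g2"
  shows "g1 = g2"
proof -
  obtain v where v: "v \<in> J" "v \<noteq> t" using J_not_singleton[OF t] .
  have "at 0 within {h. 0 < h \<and> t + h \<in> J} \<noteq> bot \<or> at 0 within {h. 0 < h \<and> t - h \<in> J} \<noteq> bot"
  proof (cases "t < v")
    case True
    have "{0<..<v - t} \<subseteq> {h. 0 < h \<and> t + h \<in> J}" using Icc_subset_J[OF t v(1)] by auto
    moreover have "0 < v - t" using True by simp
    ultimately have "at 0 within {h. 0 < h \<and> t + h \<in> J} \<noteq> bot"
      by (intro at_within_ne_bot_if_interval_subset[of 0 "v - t"]) auto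
    then show ?thesis ..
  next
    case False
    have "{0<..<t - v} \<subseteq> {h. 0 < h \<and> t - h \<in> J}" using Icc_subset_J[OF v(1) t] by auto
    moreover have "0 < t - v" using False v by simp
    ultimately have "at 0 within {h. 0 < h \<and> t - h \<in> J} \<noteq> bot"
      by (intro at_within_ne_bot_if_interval_subset[of 0 "t - v"]) auto
    then show ?thesis ..
  qed
  then show ?thesis using assms(2,3) tendsto_unique unfolding has_gen_def by blast
qed

lemma has_gen_gen: "t \<in> J \<Longrightarrow> gen_dom J G t f \<Longrightarrow> has_gen J G t f (gen J G t f)"
  unfolding gen_def gen_dom_def by (metis has_gen_unique theI)

lemma has_gen_embedded: "t \<in> J \<Longrightarrow> has_gen J G t (\<iota> z) (gen J G t (\<iota> z))"
  using regular by (intro has_gen_gen) (auto simp: regular_def)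

lemma G_embedded_in_range: "a \<in> J \<Longrightarrow> b \<in> J \<Longrightarrow> a \<le> b \<Longrightarrow> G a b (\<iota> z) \<in> range \<iota>"
  using regular unfolding regular_def Delta_def by auto

lemma set_integrable_G_gen:
  "a \<in> J \<Longrightarrow> b \<in> J \<Longrightarrow> a \<le> b \<Longrightarrow> x \<in> range \<iota> \<Longrightarrow> set_integrable lborel {a..b} (\<lambda>u. G a u (gen J G u x))"
  using regular unfolding regular_def Delta_def by auto

lemma continuous_on_G_right:
  assumes "a \<in> J" "b \<in> J" shows "continuous_on {a..b} (\<lambda>v. G a v x)"
proof (rule continuous_on_subset)
  show "continuous_on {u\<in>J. a \<le> u} (\<lambda>v. G a v x)" using regular assms by (simp add: regular_def)
  show "{a..b} \<subseteq> {u\<in>J. a \<le> u}" using Icc_subset_J[OF assms] by auto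
qed

text \<open>Regularity asks for continuity in the norm of \<open>Y\<^sub>1\<close>; continuity in \<open>Y\<close> follows because
  the embedding is bounded.\<close>
lemma continuous_on_G_left:
  assumes "t \<in> J" shows "continuous_on {u\<in>J. u \<le> t} (\<lambda>u. G u t (\<iota> z))"
proof -
  have "continuous_on {u\<in>J. u \<le> t} (\<lambda>u. \<iota> (inv \<iota> (G u t (\<iota> z))))"
    using regular assms unfolding regular_def by (intro blinfun.continuous_on continuous_on_const) auto
  moreover have "\<iota> (inv \<iota> (G u t (\<iota> z))) = G u t (\<iota> z)" if "u \<in> {u\<in>J. u \<le> t}" for u
    using G_embedded_in_range assms that by (auto intro: f_inv_into_f)
  ultimately show ?thesis by (rule continuous_on_eq)
qed

lemma G_bounded: "a \<in> J \<Longrightarrow> b \<in> J \<Longrightarrow> \<exists>C. \<forall>v\<in>{a..b}. norm (G a v) \<le> C"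
proof (rule uniform_boundedness_blinfun)
  fix x assume "a \<in> J" "b \<in> J"
  then have "bounded ((\<lambda>v. G a v x) ` {a..b})"
    by (intro compact_imp_bounded compact_continuous_image continuous_on_G_right) auto
  then show "\<exists>B. \<forall>v\<in>{a..b}. norm (G a v x) \<le> B" by (auto simp: bounded_iff)
qed

lemma quotient_filters_interior:
  assumes "a \<in> J" "b \<in> J" "a < u" "u < b"
  shows "at 0 within {h. 0 < h \<and> u + h \<in> J} = at_right 0"
    and "at 0 within {h. 0 < h \<and> u - h \<in> J} = at_right 0"
    and "at 0 within {h. u + h \<in> J} = at 0"
proof -
  have sub: "u + h \<in> J" if "h \<in> {a - u<..<b - u}" for h
    using Icc_subset_J[OF assms(1,2)] that by auto
  show "at 0 within {h. 0 < h \<and> u + h \<in> J} = at_right 0"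
    using assms sub by (intro at_within_nhd[of _ "{a - u<..<b - u}"]) auto
  show "at 0 within {h. 0 < h \<and> u - h \<in> J} = at_right 0"
    using assms sub[of "- _"] by (intro at_within_nhd[of _ "{a - u<..<u - a}"]) (auto simp: Icc_subset_J)
  show "at 0 within {h. u + h \<in> J} = at 0"
    using assms sub by (intro at_within_nhd[of _ "{a - u<..<b - u}"]) auto
qed

text \<open>Since \<open>\<Gamma>(a,u\<plusminus>h)\<close> factors through \<open>\<Gamma>(u,u+h)\<close> resp. \<open>\<Gamma>(u-h,u)\<close>, the difference quotients of
  \<open>v \<mapsto> \<Gamma>(a,v)f\<close> are \<open>\<Gamma>(a,u)\<close> resp. \<open>\<Gamma>(a,u-h)\<close> applied to the quotients defining \<open>A(u)f\<close>; the
  left one converges because \<open>\<Gamma>(a,\<cdot>)\<close> is strongly continuous and bounded on \<open>[a,b]\<close>.\<close>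
lemma G_quotient_at_right:
  assumes a: "a \<in> J" and b: "b \<in> J" and u: "a < u" "u < b"
  shows "((\<lambda>h. (1/h) *\<^sub>R (G a (u+h) (\<iota> z) - G a u (\<iota> z))) \<longlongrightarrow> G a u (gen J G u (\<iota> z))) (at_right 0)"
proof -
  let ?g = "\<iota> z"
  have uJ: "u \<in> J" using Icc_subset_J[OF a b] u by auto
  have "((\<lambda>h. (1/h) *\<^sub>R (G u (u+h) ?g - ?g)) \<longlongrightarrow> gen J G u ?g) (at_right 0)"
    using has_gen_embedded[OF uJ] unfolding has_gen_def quotient_filters_interior[OF a b u] by auto
  then have "((\<lambda>h. G a u ((1/h) *\<^sub>R (G u (u+h) ?g - ?g))) \<longlongrightarrow> G a u (gen J G u ?g)) (at_right 0)"
    by (rule blinfun.tendsto[OF tendsto_const])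
  moreover have "eventually (\<lambda>h. G a u ((1/h) *\<^sub>R (G u (u+h) ?g - ?g)) = (1/h) *\<^sub>R (G a (u+h) ?g - G a u ?g)) (at_right 0)"
    unfolding eventually_at_right_field
  proof (intro exI[of _ "b - u"] conjI allI impI)
    fix h :: real assume h: "0 < h" "h < b - u"
    then have "u + h \<in> J" using Icc_subset_J[OF uJ b] by auto
    then have "G a (u+h) ?g = G a u (G u (u+h) ?g)" using a uJ h u by (intro G_comp) auto
    then show "G a u ((1/h) *\<^sub>R (G u (u+h) ?g - ?g)) = (1/h) *\<^sub>R (G a (u+h) ?g - G a u ?g)"
      by (simp add: blinfun.scaleR_right blinfun.diff_right)
  qed (use u in simp)
  ultimately show ?thesis by (rule Lim_transform_eventually)
qed

lemma G_quotient_at_left: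
  assumes a: "a \<in> J" and b: "b \<in> J" and u: "a < u" "u < b"
  shows "((\<lambda>h. (1/h) *\<^sub>R (G a (u+h) (\<iota> z) - G a u (\<iota> z))) \<longlongrightarrow> G a u (gen J G u (\<iota> z))) (at_left 0)"
proof -
  let ?g = "\<iota> z" and ?A = "gen J G u (\<iota> z)"
  have uJ: "u \<in> J" using Icc_subset_J[OF a b] u by auto
  have left: "((\<lambda>h. (1/h) *\<^sub>R (G (u-h) u ?g - ?g)) \<longlongrightarrow> ?A) (at_right 0)"
    using has_gen_embedded[OF uJ] unfolding has_gen_def quotient_filters_interior[OF a b u] by auto
  obtain C where C: "\<forall>v\<in>{a..b}. norm (G a v) \<le> C" using G_bounded[OF a b] by blast
  have "((\<lambda>h. G a (u-h) ((1/h) *\<^sub>R (G (u-h) u ?g - ?g))) \<longlongrightarrow> G a u ?A) (at_right 0)"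
  proof (rule tendsto_blinfun_apply_bounded[OF _ _ left])
    show "eventually (\<lambda>h. norm (G a (u-h)) \<le> C) (at_right 0)"
      unfolding eventually_at_right_field using u C by (intro exI[of _ "u - a"]) auto
    have "isCont (\<lambda>v. G a v ?A) u"
      using continuous_on_G_right[OF a b] u by (intro continuous_on_interior) auto
    moreover have "((\<lambda>h. u - h) \<longlongrightarrow> u) (at_right (0::real))" by (auto intro!: tendsto_eq_intros)
    ultimately show "((\<lambda>h. G a (u-h) ?A) \<longlongrightarrow> G a u ?A) (at_right 0)"
      by (rule isCont_tendsto_compose)
  qed
  moreover have "eventually (\<lambda>h. G a (u-h) ((1/h) *\<^sub>R (G (u-h) u ?g - ?g))
      = (1 / - h) *\<^sub>R (G a (u + - h) ?g - G a u ?g)) (at_right 0)"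
    unfolding eventually_at_right_field
  proof (intro exI[of _ "u - a"] conjI allI impI)
    fix h :: real assume h: "0 < h" "h < u - a"
    then have "u - h \<in> J" using Icc_subset_J[OF a uJ] by auto
    then have "G a u ?g = G a (u-h) (G (u-h) u ?g)" using a uJ h by (intro G_comp) auto
    then show "G a (u-h) ((1/h) *\<^sub>R (G (u-h) u ?g - ?g)) = (1 / - h) *\<^sub>R (G a (u + - h) ?g - G a u ?g)"
      by (simp add: blinfun.scaleR_right blinfun.diff_right scaleR_diff_right)
  qed (use u in simp)
  ultimately show ?thesis
    unfolding filterlim_at_left_to_right minus_zero by (rule Lim_transform_eventually)
qed

lemma G_has_vector_derivative:
  assumes "a \<in> J" and "b \<in> J" and "a < u" "u < b"
  shows "((\<lambda>v. G a v (\<iota> z)) has_vector_derivative G a u (gen J G u (\<iota> z))) (at u)"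
  unfolding has_vector_derivative_iff_quotient filterlim_at_split
  using G_quotient_at_left[OF assms] G_quotient_at_right[OF assms] ..

lemma G_minus_id_eq_integral:
  assumes a: "a \<in> J" and b: "b \<in> J" and ab: "a \<le> b" and x: "x \<in> range \<iota>"
  shows "G a b x - x = (LBINT u:{a..b}. G a u (gen J G u x))"
proof -
  obtain z where z: "x = \<iota> z" using x by blast
  show ?thesis
    using set_integral_FTC[OF ab continuous_on_G_right[OF a b] G_has_vector_derivative[OF a b, of _ z]
        set_integrable_G_gen[OF a b ab x, unfolded z]]
    by (simp add: G_id[OF a] z)
qed

text \<open>\<open>A(u)f\<close> is the limit of \<open>\<Gamma>(a\<^sub>k,u) A(u)f\<close> along grid points \<open>a\<^sub>k \<uparrow> u\<close>; each grid point contributes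
  a measurable function by regularity, and the grid index depends measurably on \<open>u\<close>.\<close>
lemma gen_measurable:
  assumes s: "s \<in> J" and t: "t \<in> J" and f: "f \<in> dom_AY1 J G \<iota>"
  shows "set_borel_measurable lborel {s..t} (\<lambda>u. gen J G u f)"
  unfolding set_borel_measurable_def
proof -
  define grid where "grid k j = s + real j / real (Suc k)" for k j :: nat
  define index where "index k u = nat \<lfloor>real (Suc k) * (u - s)\<rfloor>" for k u
  define H where "H k j u = indicator {grid k j..t} u *\<^sub>R G (grid k j) u (gen J G u f)" for k j u
  have H_measurable: "H k j \<in> borel_measurable lborel" for k j
  proof (cases "grid k j \<le> t")
    case True
    then have "grid k j \<in> J" using Icc_subset_J[OF s t] by (auto simp: grid_def)
    from set_integrable_G_gen[OF this t True] f show ?thesis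
      unfolding H_def[abs_def] set_integrable_def dom_AY1_def by (auto intro: borel_measurable_integrable)
  next
    case False
    then have "H k j = (\<lambda>_. 0)" by (auto simp: H_def fun_eq_iff)
    then show ?thesis by simp
  qed
  have "(\<lambda>u. H k (index k u) u) \<in> borel_measurable lborel" for k
    unfolding index_def by (rule measurable_compose_countable[OF H_measurable]) measurable
  then have approx_measurable: "(\<lambda>u. indicator {s..t} u *\<^sub>R H k (index k u) u) \<in> borel_measurable lborel" for k
    by measurable
  show "(\<lambda>u. indicator {s..t} u *\<^sub>R gen J G u f) \<in> borel_measurable lborel"
  proof (rule borel_measurable_LIMSEQ_metric[OF approx_measurable])
    fix u
    show "(\<lambda>k. indicator {s..t} u *\<^sub>R H k (index k u) u) \<longlonglongrightarrow> indicator {s..t} u *\<^sub>R gen J G u f"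
    proof (cases "u \<in> {s..t}")
      case True
      then have uJ: "u \<in> J" using Icc_subset_J[OF s t] by auto
      obtain w where w: "gen J G u f = \<iota> w" using f uJ by (auto simp: dom_AY1_def)
      have grid_bounds: "s \<le> grid k (index k u)" "grid k (index k u) \<le> u" for k
        using True grid_point_bounds[of s u "real (Suc k)"] by (simp_all add: grid_def index_def)
      have "(\<lambda>k. grid k (index k u)) \<longlonglongrightarrow> u"
        using True grid_point_tendsto[of s u] by (simp add: grid_def index_def)
      then have "(\<lambda>k. G (grid k (index k u)) u (\<iota> w)) \<longlonglongrightarrow> G u u (\<iota> w)"
      proof (rule continuous_on_tendsto_compose[OF continuous_on_G_left[OF uJ]])
        have "grid k (index k u) \<in> J" for k using grid_bounds Icc_subset_J[OF s uJ] by auto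
        then show "\<forall>\<^sub>F k in sequentially. grid k (index k u) \<in> {v \<in> J. v \<le> u}"
          using grid_bounds by simp
      qed (use uJ in simp)
      moreover have "H k (index k u) u = G (grid k (index k u)) u (\<iota> w)" for k
        using True grid_bounds(2)[of k] w by (simp add: H_def)
      ultimately show ?thesis using True w G_id[OF uJ] by simp
    qed simp
  qed
qed

lemma gen_integrable:
  assumes s: "s \<in> J" and t: "t \<in> J" and f: "f \<in> dom_AY1 J G \<iota>"
    and bdd: "\<forall>u\<in>J. bounded_linear (\<lambda>z. gen J G u (\<iota> z))"
    and L1: "set_integrable lborel {s..t} (\<lambda>u. onorm (\<lambda>z. gen J G u (\<iota> z)))"
  shows "set_integrable lborel {s..t} (\<lambda>u. gen J G u f)"
proof -
  obtain z where z: "f = \<iota> z" using f by (auto simp: dom_AY1_def)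
  show ?thesis
  proof (rule set_integrable_bound[OF _ gen_measurable[OF s t f]])
    show "set_integrable lborel {s..t} (\<lambda>u. onorm (\<lambda>z. gen J G u (\<iota> z)) * norm z)"
      using L1 by (rule set_integrable_mult_left)
    show "AE u in lborel. u \<in> {s..t} \<longrightarrow> norm (gen J G u f) \<le> norm (onorm (\<lambda>z. gen J G u (\<iota> z)) * norm z)"
    proof (intro AE_I2 impI)
      fix u assume "u \<in> {s..t}"
      then have "u \<in> J" using Icc_subset_J[OF s t] by auto
      then have "norm (gen J G u f) \<le> onorm (\<lambda>z. gen J G u (\<iota> z)) * norm z"
        using bdd z onorm[of "\<lambda>z. gen J G u (\<iota> z)"] by simp
      then show "norm (gen J G u f) \<le> norm (onorm (\<lambda>z. gen J G u (\<iota> z)) * norm z)" by simp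
    qed
  qed
qed

lemma G_eq_integral_expansion:
  assumes s: "s \<in> J" and t: "t \<in> J" and st: "s \<le> t" and f: "f \<in> dom_AY1 J G \<iota>"
    and bdd: "\<forall>u\<in>J. bounded_linear (\<lambda>z. gen J G u (\<iota> z))"
    and L1: "set_integrable lborel {s..t} (\<lambda>u. onorm (\<lambda>z. gen J G u (\<iota> z)))"
  shows "G s t f = f + (LBINT u:{s..t}. gen J G u f) + (LBINT u:{s..t}. G s u (gen J G u f) - gen J G u f)"
proof -
  have f_range: "f \<in> range \<iota>" using f by (simp add: dom_AY1_def)
  have "(LBINT u:{s..t}. G s u (gen J G u f) - gen J G u f)
      = (LBINT u:{s..t}. G s u (gen J G u f)) - (LBINT u:{s..t}. gen J G u f)"
    using set_integrable_G_gen[OF s t st f_range] gen_integrable[OF s t f bdd L1]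
    by (rule set_integral_diff(2))
  moreover have "G s t f - f = (LBINT u:{s..t}. G s u (gen J G u f))"
    by (rule G_minus_id_eq_integral[OF s t st f_range])
  ultimately show ?thesis by (simp add: algebra_simps)
qed

lemma G_expansion:
  assumes s: "s \<in> J" and t: "t \<in> J" and st: "s \<le> t" and f: "f \<in> dom_AY1 J G \<iota>"
    and bdd: "\<forall>u\<in>J. bounded_linear (\<lambda>z. gen J G u (\<iota> z))"
    and L1: "set_integrable lborel {s..t} (\<lambda>u. onorm (\<lambda>z. gen J G u (\<iota> z)))"
  shows "G s t f = f + (LBINT u:{s..t}. gen J G u f)
                + (LBINT u:{s..t}. LBINT r:{s..u}. G s r (gen J G r (gen J G u f)))"
proof -
  have "(LBINT u:{s..t}. LBINT r:{s..u}. G s r (gen J G r (gen J G u f)))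
      = (LBINT u:{s..t}. G s u (gen J G u f) - gen J G u f)"
  proof (rule set_lebesgue_integral_cong, simp, intro allI impI)
    fix u assume u: "u \<in> {s..t}"
    then have uJ: "u \<in> J" using Icc_subset_J[OF s t] by auto
    then have "gen J G u f \<in> range \<iota>" using f by (simp add: dom_AY1_def)
    with u uJ show "(LBINT r:{s..u}. G s r (gen J G r (gen J G u f))) = G s u (gen J G u f) - gen J G u f"
      by (simp add: G_minus_id_eq_integral[OF s])
  qed
  then show ?thesis using G_eq_integral_expansion[OF assms] by simp
qed

lemma eventually_in_J:
  assumes "a \<in> J" "b \<in> J" "a < u" "u < b"
  shows "eventually (\<lambda>v. v \<in> J) (at u)"
  unfolding eventually_at_topological
  using assms Icc_subset_J[OF assms(1,2)] by (intro exI[of _ "{a<..<b}"]) auto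

lemma has_gen_deriv_unique:
  assumes u: "u \<in> J" and "has_gen_deriv J G \<iota> u f g1" and "has_gen_deriv J G \<iota> u f g2"
  shows "g1 = g2"
proof -
  obtain v where v: "v \<in> J" "v \<noteq> u" using J_not_singleton[OF u] .
  have "at 0 within {h. u + h \<in> J} \<noteq> bot"
  proof (cases "u < v")
    case True
    have "{0<..<v - u} \<subseteq> {h. u + h \<in> J}" using Icc_subset_J[OF u v(1)] by auto
    with True show ?thesis by (intro at_within_ne_bot_if_interval_subset[of 0 "v - u"]) auto
  next
    case False
    have "{v - u<..<0} \<subseteq> {h. u + h \<in> J}" using Icc_subset_J[OF v(1) u] by auto
    moreover have "v - u < 0" using False v by simp
    ultimately show ?thesis by (intro at_within_ne_bot_if_interval_subset[of "v - u" 0]) auto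
  qed
  then show ?thesis using assms(2,3) tendsto_unique unfolding has_gen_deriv_def by blast
qed

lemma has_gen_deriv_gen':
  assumes "u \<in> J" and "f \<in> dom_A' J G \<iota>"
  shows "has_gen_deriv J G \<iota> u f (THE g'. has_gen_deriv J G \<iota> u f g')"
proof -
  obtain g where "has_gen_deriv J G \<iota> u f g" using assms by (auto simp: dom_A'_def)
  then show ?thesis using has_gen_deriv_unique[OF assms(1)] by (metis theI)
qed

lemma embed_inv_gen:
  assumes "v \<in> J" and "f \<in> dom_AY1 J G \<iota>"
  shows "\<iota> (inv \<iota> (gen J G v f)) = gen J G v f"
  using assms by (auto simp: dom_AY1_def intro: f_inv_into_f)

lemma gen_has_vector_derivative:
  assumes a: "a \<in> J" and b: "b \<in> J" and u: "a < u" "u < b" and f: "f \<in> dom_A' J G \<iota>"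
  shows "((\<lambda>v. gen J G v f) has_vector_derivative gen' J G \<iota> u f) (at u)"
proof -
  let ?z = "\<lambda>v. inv \<iota> (gen J G v f)"
  have uJ: "u \<in> J" using Icc_subset_J[OF a b] u by auto
  have f_Y1: "f \<in> dom_AY1 J G \<iota>" using f by (simp add: dom_A'_def)
  have "((\<lambda>h. (1/h) *\<^sub>R (?z (u + h) - ?z u)) \<longlongrightarrow> (THE g'. has_gen_deriv J G \<iota> u f g')) (at 0)"
    using has_gen_deriv_gen'[OF uJ f] unfolding has_gen_deriv_def quotient_filters_interior(3)[OF a b u] .
  then have "((\<lambda>h. \<iota> ((1/h) *\<^sub>R (?z (u + h) - ?z u))) \<longlongrightarrow> gen' J G \<iota> u f) (at 0)"
    unfolding gen'_def by (rule blinfun.tendsto[OF tendsto_const])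
  moreover have "eventually (\<lambda>h. \<iota> ((1/h) *\<^sub>R (?z (u + h) - ?z u)) = (1/h) *\<^sub>R (gen J G (u + h) f - gen J G u f)) (at 0)"
    using eventually_in_J[OF a b u] unfolding eventually_at_to_0[of _ u]
  proof eventually_elim
    case (elim h)
    then show ?case
      using embed_inv_gen[OF uJ f_Y1] embed_inv_gen[OF _ f_Y1, of "u + h"]
      by (simp add: blinfun.scaleR_right blinfun.diff_right add.commute)
  qed
  ultimately show ?thesis
    unfolding has_vector_derivative_iff_quotient by (rule Lim_transform_eventually)
qed

text \<open>Differentiability of \<open>A(\<cdot>)f\<close> in \<open>Y\<^sub>1\<close> already makes it continuous.\<close>
lemma continuous_on_gen:
  assumes f: "f \<in> dom_A' J G \<iota>"
  shows "continuous_on J (\<lambda>v. gen J G v f)"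
  unfolding continuous_on_def
proof
  fix v assume v: "v \<in> J"
  let ?z = "\<lambda>v. inv \<iota> (gen J G v f)" and ?F = "at 0 within {h. v + h \<in> J}"
  have f_Y1: "f \<in> dom_AY1 J G \<iota>" using f by (simp add: dom_A'_def)
  obtain D where "has_gen_deriv J G \<iota> v f D" using has_gen_deriv_gen'[OF v f] ..
  then have "((\<lambda>h. h *\<^sub>R ((1/h) *\<^sub>R (?z (v + h) - ?z v))) \<longlongrightarrow> 0 *\<^sub>R D) ?F"
    unfolding has_gen_deriv_def by (rule tendsto_scaleR[OF tendsto_ident_at])
  then have "((\<lambda>h. h *\<^sub>R ((1/h) *\<^sub>R (?z (v + h) - ?z v))) \<longlongrightarrow> 0) ?F" by simp
  moreover have "eventually (\<lambda>h. h *\<^sub>R ((1/h) *\<^sub>R (?z (v + h) - ?z v)) = ?z (v + h) - ?z v) ?F"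
  proof (unfold eventually_at_filter, intro always_eventually allI impI)
    fix h :: real assume "h \<noteq> 0"
    then show "h *\<^sub>R ((1/h) *\<^sub>R (?z (v + h) - ?z v)) = ?z (v + h) - ?z v"
      by (simp only: scaleR_scaleR) (simp add: field_simps del: scaleR_diff_right)
  qed
  ultimately have "((\<lambda>h. ?z (v + h) - ?z v) \<longlongrightarrow> 0) ?F"
    by (rule Lim_transform_eventually)
  then have "((\<lambda>h. ?z (v + h)) \<longlongrightarrow> ?z v) ?F" by (rule LIM_zero_cancel)
  then have "(?z \<longlongrightarrow> ?z v) (at v within J)" by (rule tendsto_at_within_shift)
  then have "((\<lambda>x. \<iota> (?z x)) \<longlongrightarrow> \<iota> (?z v)) (at v within J)"
    by (rule blinfun.tendsto[OF tendsto_const])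
  moreover have "eventually (\<lambda>x. \<iota> (?z x) = gen J G x f) (at v within J)"
    by (auto simp: eventually_at_filter embed_inv_gen[OF _ f_Y1])
  ultimately have "((\<lambda>x. gen J G x f) \<longlongrightarrow> \<iota> (?z v)) (at v within J)"
    by (rule Lim_transform_eventually)
  then show "((\<lambda>x. gen J G x f) \<longlongrightarrow> gen J G v f) (at v within J)"
    by (simp only: embed_inv_gen[OF v f_Y1])
qed

lemma G_gen_has_vector_derivative:
  assumes s: "s \<in> J" and t: "t \<in> J" and u: "s < u" "u < t" and f: "f \<in> dom_A' J G \<iota>"
  shows "((\<lambda>v. G s v (gen J G v f)) has_vector_derivative
            G s u (gen' J G \<iota> u f) + G s u (gen J G u (gen J G u f))) (at u)"
proof -
  obtain C where C: "\<forall>v\<in>{s..t}. norm (G s v) \<le> C" using G_bounded[OF s t] by blast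
  have "u \<in> J" using Icc_subset_J[OF s t] u by auto
  with f have "gen J G u f \<in> range \<iota>" by (simp add: dom_A'_def dom_AY1_def)
  then obtain w where w: "gen J G u f = \<iota> w" by blast
  show ?thesis
  proof (rule has_vector_derivative_blinfun_apply)
    show "eventually (\<lambda>v. norm (G s v) \<le> C) (at u)"
      unfolding eventually_at_topological using u C by (intro exI[of _ "{s<..<t}"]) auto
    show "isCont (\<lambda>v. G s v (gen' J G \<iota> u f)) u"
      using continuous_on_G_right[OF s t] u by (intro continuous_on_interior) auto
    show "((\<lambda>v. G s v (gen J G u f)) has_vector_derivative G s u (gen J G u (gen J G u f))) (at u)"
      unfolding w by (rule G_has_vector_derivative[OF s t u])
    show "((\<lambda>v. gen J G v f) has_vector_derivative gen' J G \<iota> u f) (at u)"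
      by (rule gen_has_vector_derivative[OF s t u f])
  qed
qed

lemma continuous_on_G_gen:
  assumes s: "s \<in> J" and t: "t \<in> J" and f: "f \<in> dom_A' J G \<iota>"
  shows "continuous_on {s..t} (\<lambda>v. G s v (gen J G v f))"
proof -
  obtain C where C: "\<forall>v\<in>{s..t}. norm (G s v) \<le> C" using G_bounded[OF s t] by blast
  have "continuous_on {s..t} (\<lambda>v. gen J G v f)"
    using continuous_on_gen[OF f] Icc_subset_J[OF s t] by (rule continuous_on_subset)
  with C continuous_on_G_right[OF s t] show ?thesis by (rule continuous_on_blinfun_apply_bounded)
qed

text \<open>The product rule gives \<open>\<Gamma>(s,u)A(u)\<^sup>2f + \<Gamma>(s,u)A'(u)f - A'(u)f\<close>, and the last difference is
  expanded once more as an integral.\<close>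
lemma G_gen_minus_gen_has_vector_derivative:
  assumes s: "s \<in> J" and t: "t \<in> J" and u: "s < u" "u < t" and f: "f \<in> dom_A' J G \<iota>"
  shows "((\<lambda>v. G s v (gen J G v f) - gen J G v f) has_vector_derivative
            G s u (gen J G u (gen J G u f)) + (LBINT r:{s..u}. G s r (gen J G r (gen' J G \<iota> u f)))) (at u)"
proof -
  have "G s u (gen' J G \<iota> u f) - gen' J G \<iota> u f = (LBINT r:{s..u}. G s r (gen J G r (gen' J G \<iota> u f)))"
    using s Icc_subset_J[OF s t] u by (intro G_minus_id_eq_integral) (auto simp: gen'_def)
  then show ?thesis
    using has_vector_derivative_diff[OF G_gen_has_vector_derivative[OF s t u f]
        gen_has_vector_derivative[OF s t u f]]
    by (simp add: algebra_simps)
qed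

lemma G_expansion_gen':
  assumes s: "s \<in> J" and t: "t \<in> J" and st: "s \<le> t" and f: "f \<in> dom_A' J G \<iota>"
    and bdd: "\<forall>u\<in>J. bounded_linear (\<lambda>z. gen J G u (\<iota> z))"
    and L1: "set_integrable lborel {s..t} (\<lambda>u. onorm (\<lambda>z. gen J G u (\<iota> z)))"
    and I1: "set_integrable lborel {s..t} (\<lambda>u. G s u (gen J G u (gen J G u f)))"
    and I2: "set_integrable lborel {s..t} (\<lambda>u. LBINT r:{s..u}. G s r (gen J G r (gen' J G \<iota> u f)))"
  shows "G s t f = f + (LBINT u:{s..t}. gen J G u f)
                  + (LBINT u:{s..t}. (t - u) *\<^sub>R G s u (gen J G u (gen J G u f)))
                  + (LBINT u:{s..t}. (t - u) *\<^sub>R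
                       (LBINT r:{s..u}. G s r (gen J G r (gen' J G \<iota> u f))))"
proof -
  have f_Y1: "f \<in> dom_AY1 J G \<iota>" using f by (simp add: dom_A'_def)
  have f_range: "f \<in> range \<iota>" using f_Y1 by (simp add: dom_AY1_def)
  define K1 where "K1 u = G s u (gen J G u (gen J G u f))" for u
  define K2 where "K2 u = (LBINT r:{s..u}. G s r (gen J G r (gen' J G \<iota> u f)))" for u
  have weighted: "set_integrable lborel {s..t} (\<lambda>u. (t - u) *\<^sub>R K u)"
    if "set_integrable lborel {s..t} K" for K :: "real \<Rightarrow> 'y"
    using st by (intro set_integrable_bounded_scaleR[OF that, where B="t - s"]) auto
  have "(LBINT u:{s..t}. G s u (gen J G u f) - gen J G u f) = (LBINT u:{s..t}. (t - u) *\<^sub>R (K1 u + K2 u))"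
  proof (rule set_integral_eq_weighted_derivative[OF st])
    show "continuous_on {s..t} (\<lambda>u. G s u (gen J G u f) - gen J G u f)"
      using continuous_on_G_gen[OF s t f] continuous_on_gen[OF f] Icc_subset_J[OF s t]
      by (intro continuous_on_diff) (auto intro: continuous_on_subset)
    show "G s s (gen J G s f) - gen J G s f = 0" by (simp add: G_id[OF s])
    show "((\<lambda>v. G s v (gen J G v f) - gen J G v f) has_vector_derivative K1 u + K2 u) (at u)"
      if "s < u" "u < t" for u
      unfolding K1_def K2_def using G_gen_minus_gen_has_vector_derivative[OF s t that f] .
    show "set_integrable lborel {s..t} (\<lambda>u. G s u (gen J G u f) - gen J G u f)"
      using set_integrable_G_gen[OF s t st f_range] gen_integrable[OF s t f_Y1 bdd L1]
      by (rule set_integral_diff(1))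
    show "set_integrable lborel {s..t} (\<lambda>u. K1 u + K2 u)"
      unfolding K1_def K2_def using I1 I2 by (rule set_integral_add(1))
  qed
  also have "\<dots> = (LBINT u:{s..t}. (t - u) *\<^sub>R K1 u) + (LBINT u:{s..t}. (t - u) *\<^sub>R K2 u)"
    using weighted[OF I1] weighted[OF I2] by (simp add: K1_def K2_def scaleR_add_right set_integral_add(2))
  finally show ?thesis
    using G_eq_integral_expansion[OF s t st f_Y1 bdd L1] by (simp add: K1_def K2_def add.assoc)
qed

end

theorem theorem2p13:
  fixes G :: "real \<Rightarrow> real \<Rightarrow> ('y::{banach,second_countable_topology} \<Rightarrow>\<^sub>L 'y)"
    and \<iota> :: "'z::{banach,second_countable_topology} \<Rightarrow>\<^sub>L 'y"
    and J :: "real set" and s t :: real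
  assumes J: "is_J J"
    and emb: "inj (blinfun_apply \<iota>)"
    and semi: "inhom_semigroup J G"
    and reg: "regular J G \<iota>"
    and st: "(s, t) \<in> Delta J"
    and bdd: "\<forall>u\<in>J. bounded_linear (\<lambda>z. gen J G u (blinfun_apply \<iota> z))"
    and L1: "set_integrable lborel {s..t} (\<lambda>u. onorm (\<lambda>z. gen J G u (blinfun_apply \<iota> z)))"
  shows "(\<forall>f\<in>dom_AY1 J G \<iota>.
            blinfun_apply (G s t) f =
              f + (LBINT u:{s..t}. gen J G u f)
                + (LBINT u:{s..t}. LBINT r:{s..u}. blinfun_apply (G s r) (gen J G r (gen J G u f))))
       \<and> ((\<forall>z. continuous_on J (\<lambda>u. gen J G u (blinfun_apply \<iota> z))) \<longrightarrow>
           (\<forall>f\<in>dom_A' J G \<iota>.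
              set_integrable lborel {s..t} (\<lambda>u. blinfun_apply (G s u) (gen J G u (gen J G u f))) \<longrightarrow>
              set_integrable lborel {s..t}
                (\<lambda>u. LBINT r:{s..u}. blinfun_apply (G s r) (gen J G r (gen' J G \<iota> u f))) \<longrightarrow>
              blinfun_apply (G s t) f =
                f + (LBINT u:{s..t}. gen J G u f)
                  + (LBINT u:{s..t}. (t - u) *\<^sub>R blinfun_apply (G s u) (gen J G u (gen J G u f)))
                  + (LBINT u:{s..t}. (t - u) *\<^sub>R
                       (LBINT r:{s..u}. blinfun_apply (G s r) (gen J G r (gen' J G \<iota> u f))))))"
proof -
  interpret regular_inhom_semigroup J G \<iota> using J semi reg by unfold_locales
  have s: "s \<in> J" and t: "t \<in> J" and st': "s \<le> t" using st by (auto simp: Delta_def)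
  show ?thesis
    using G_expansion[OF s t st' _ bdd L1] G_expansion_gen'[OF s t st' _ bdd L1] by blast
qed

end
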